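(* Let $\mathcal{H}$ be a separable, infinite dimensional, complex Hilbert space, let $\mathscr{U}$ be a free ultrafilter on $\mathbb{N}$, let $(T_{n})_{n\geq1}$ be a sequence in $\mathcal{B}(\mathcal{H})$ and let $B\in\mathcal{B}(\mathcal{H})$. (1) If $T_{n}\to B$ in the strong operator topology, then $B$ is unitarily equivalent to a restriction of $(T_{1},T_{2},\ldots)_{\mathscr{U}}$. (2) If $T_{n}\to B$ in the weak operator topology, then $B$ is unitarily equivalent to a compression of $(T_{1},T_{2},\ldots)_{\mathscr{U}}$. (3) If $T_{n}\to B$ in the $*$-strong operator topology, then $B$ is unitarily equivalent to a reducing part of $(T_{1},T_{2},\ldots)_{\mathscr{U}}$. (In each case $\sup_n\|T_n\|<\infty$, so the ultraproduct is well defined.)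
   Context: Let $\mathcal{H}^{\mathscr{U}}=\ell_\infty(\mathcal{H})/\{(x_n)_{n\ge1}\in\ell_\infty(\mathcal{H}):\lim_{n,\mathscr{U}}\|x_n\|=0\}$, with the image of $(x_n)$ denoted $(x_n)_{\mathscr{U}}$; it is a Hilbert space with inner product $\langle (x_n)_{\mathscr{U}},(y_n)_{\mathscr{U}}\rangle=\lim_{n,\mathscr{U}}\langle x_n,y_n\rangle$. For a norm-bounded sequence $(T_n)$ in $\mathcal{B}(\mathcal{H})$, the ultraproduct $(T_1,T_2,\ldots)_{\mathscr{U}}\in\mathcal{B}(\mathcal{H}^{\mathscr{U}})$ is $(x_n)_{\mathscr{U}}\mapsto(T_nx_n)_{\mathscr{U}}$. For an operator $T$ on a Hilbert space and a closed subspace $\mathcal{M}$: $T|_{\mathcal{M}}$ is a restriction if $\mathcal{M}$ is $T$-invariant; it is a reducing part if $\mathcal{M}$ is invariant under $T$ and $T^{*}$; the compression of $T$ to $\mathcal{M}$ is $PT|_{\mathcal{M}}$ with $P$ the orthogonal projection onto $\mathcal{M}$. $T_\alpha\to T$ in the $*$-strong operator topology means $T_\alpha\to T$ and $T_\alpha^*\to T^*$ strongly. *)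

theory Defs
  imports "HOL-Analysis.Analysis"
begin

text \<open>Completeness is added separately via the
class complete_space.\<close>

class complex_inner = real_normed_vector +
  fixes scaleC :: "complex \<Rightarrow> 'a \<Rightarrow> 'a"
  fixes cinner :: "'a \<Rightarrow> 'a \<Rightarrow> complex"
  assumes scaleC_add_right: "scaleC a (x + y) = scaleC a x + scaleC a y"
    and scaleC_add_left: "scaleC (a + b) x = scaleC a x + scaleC b x"
    and scaleC_scaleC: "scaleC a (scaleC b x) = scaleC (a * b) x"
    and scaleC_one: "scaleC 1 x = x"
    and scaleR_scaleC: "scaleR r x = scaleC (complex_of_real r) x"
    and cinner_add_left: "cinner (x + y) z = cinner x z + cinner y z"
    and cinner_scaleC_left: "cinner (scaleC a x) y = a * cinner x y"
    and cinner_commute: "cinner x y = cnj (cinner y x)"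
    and cinner_self_real: "Im (cinner x x) = 0"
    and norm_eq_sqrt_cinner: "norm x = sqrt (Re (cinner x x))"

definition cspan :: "'a::complex_inner set \<Rightarrow> 'a set" where
  "cspan A = {x. \<exists>F c. finite F \<and> F \<subseteq> A \<and> x = (\<Sum>a\<in>F. scaleC (c a) a)}"

definition infinite_dimensional :: "'a::complex_inner itself \<Rightarrow> bool" where
  "infinite_dimensional _ \<longleftrightarrow> (\<forall>A::'a set. finite A \<longrightarrow> cspan A \<noteq> UNIV)"

definition separable_type :: "'a::topological_space itself \<Rightarrow> bool" where
  "separable_type _ \<longleftrightarrow> (\<exists>D::'a set. countable D \<and> closure D = UNIV)"

definition cblinear :: "('a::complex_inner \<Rightarrow> 'a) \<Rightarrow> bool" where
  "cblinear T \<longleftrightarrow> bounded_linear T \<and> (\<forall>c x. T (scaleC c x) = scaleC c (T x))"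

definition cadjoint :: "('a::complex_inner \<Rightarrow> 'a) \<Rightarrow> ('a \<Rightarrow> 'a)" where
  "cadjoint T = (THE A. \<forall>x y. cinner (T x) y = cinner x (A y))"

definition sot_conv :: "(nat \<Rightarrow> 'a::complex_inner \<Rightarrow> 'a) \<Rightarrow> ('a \<Rightarrow> 'a) \<Rightarrow> bool" where
  "sot_conv T B \<longleftrightarrow> (\<forall>x. (\<lambda>n. T n x) \<longlonglongrightarrow> B x)"

definition wot_conv :: "(nat \<Rightarrow> 'a::complex_inner \<Rightarrow> 'a) \<Rightarrow> ('a \<Rightarrow> 'a) \<Rightarrow> bool" where
  "wot_conv T B \<longleftrightarrow> (\<forall>x y. (\<lambda>n. cinner (T n x) y) \<longlonglongrightarrow> cinner (B x) y)"

definition star_sot_conv :: "(nat \<Rightarrow> 'a::complex_inner \<Rightarrow> 'a) \<Rightarrow> ('a \<Rightarrow> 'a) \<Rightarrow> bool" where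
  "star_sot_conv T B \<longleftrightarrow> sot_conv T B \<and> sot_conv (\<lambda>n. cadjoint (T n)) (cadjoint B)"

definition free_ultrafilter :: "nat filter \<Rightarrow> bool" where
  "free_ultrafilter U \<longleftrightarrow> U \<noteq> bot
     \<and> (\<forall>P. eventually P U \<or> eventually (\<lambda>n. \<not> P n) U)
     \<and> (\<forall>m. eventually (\<lambda>n. n \<noteq> m) U)"

text \<open>Elements of H^U are represented by their representatives, i.e. by
norm-bounded sequences in H (elements of l_inf(H)); two representatives
denote the same element of H^U iff they are related by ueq.  Subspaces of
H^U are represented by saturated sets of representatives.\<close>

definition lbounded :: "(nat \<Rightarrow> 'a::real_normed_vector) \<Rightarrow> bool" where
  "lbounded x \<longleftrightarrow> bounded (range x)"

definition ueq :: "nat filter \<Rightarrow> (nat \<Rightarrow> 'a::real_normed_vector) \<Rightarrow> (nat \<Rightarrow> 'a) \<Rightarrow> bool" where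
  "ueq U x y \<longleftrightarrow> ((\<lambda>n. norm (x n - y n)) \<longlongrightarrow> 0) U"

definition unorm :: "nat filter \<Rightarrow> (nat \<Rightarrow> 'a::real_normed_vector) \<Rightarrow> real" where
  "unorm U x = Lim U (\<lambda>n. norm (x n))"

definition uinner :: "nat filter \<Rightarrow> (nat \<Rightarrow> 'a::complex_inner) \<Rightarrow> (nat \<Rightarrow> 'a) \<Rightarrow> complex" where
  "uinner U x y = Lim U (\<lambda>n. cinner (x n) (y n))"

text \<open>The ultraproduct operator (T_1, T_2, ...)_U acting on representatives.\<close>

definition uop :: "(nat \<Rightarrow> 'a \<Rightarrow> 'a) \<Rightarrow> (nat \<Rightarrow> 'a) \<Rightarrow> (nat \<Rightarrow> 'a)" where
  "uop T x = (\<lambda>n. T n (x n))"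

text \<open>A closed (complex) subspace M of H^U, given by the set S of all
representatives of elements of M.\<close>

definition closed_usubspace :: "nat filter \<Rightarrow> (nat \<Rightarrow> 'a::complex_inner) set \<Rightarrow> bool" where
  "closed_usubspace U S \<longleftrightarrow>
     (\<forall>s\<in>S. lbounded s)
     \<and> (\<lambda>n. 0) \<in> S
     \<and> (\<forall>s\<in>S. \<forall>t\<in>S. (\<lambda>n. s n + t n) \<in> S)
     \<and> (\<forall>s\<in>S. \<forall>c. (\<lambda>n. scaleC c (s n)) \<in> S)
     \<and> (\<forall>s\<in>S. \<forall>t. lbounded t \<and> ueq U s t \<longrightarrow> t \<in> S)
     \<and> (\<forall>x. lbounded x \<and> (\<forall>e>0. \<exists>s\<in>S. unorm U (\<lambda>n. x n - s n) < e) \<longrightarrow> x \<in> S)"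

text \<open>W is (a representative-level description of) a unitary operator from
H onto the subspace M of H^U represented by S.\<close>

definition unitary_onto :: "nat filter \<Rightarrow> (nat \<Rightarrow> 'a::complex_inner) set \<Rightarrow> ('a \<Rightarrow> (nat \<Rightarrow> 'a)) \<Rightarrow> bool" where
  "unitary_onto U S W \<longleftrightarrow>
     (\<forall>x. W x \<in> S)
     \<and> (\<forall>x y. ueq U (W (x + y)) (\<lambda>n. W x n + W y n))
     \<and> (\<forall>c x. ueq U (W (scaleC c x)) (\<lambda>n. scaleC c (W x n)))
     \<and> (\<forall>x y. uinner U (W x) (W y) = cinner x y)
     \<and> (\<forall>s\<in>S. \<exists>x. ueq U (W x) s)"

definition uinvariant :: "nat filter \<Rightarrow> (nat \<Rightarrow> 'a::complex_inner \<Rightarrow> 'a) \<Rightarrow> (nat \<Rightarrow> 'a) set \<Rightarrow> bool" where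
  "uinvariant U T S \<longleftrightarrow> (\<forall>s\<in>S. uop T s \<in> S)"

text \<open>M is invariant under the adjoint of (T_n)_U: for every s in M, the
vector ((T_n)_U)^* s (the vector t with <(T_n)_U v, s> = <v, t> for all v
in H^U) lies in M.\<close>

definition uinvariant_adj :: "nat filter \<Rightarrow> (nat \<Rightarrow> 'a::complex_inner \<Rightarrow> 'a) \<Rightarrow> (nat \<Rightarrow> 'a) set \<Rightarrow> bool" where
  "uinvariant_adj U T S \<longleftrightarrow>
     (\<forall>s\<in>S. \<exists>t\<in>S. \<forall>v. lbounded v \<longrightarrow> uinner U (uop T v) s = uinner U v t)"

text \<open>m represents the orthogonal projection onto M of the vector v of H^U.\<close>

definition uproj :: "nat filter \<Rightarrow> (nat \<Rightarrow> 'a::complex_inner) set \<Rightarrow> (nat \<Rightarrow> 'a) \<Rightarrow> (nat \<Rightarrow> 'a) \<Rightarrow> bool" where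
  "uproj U S v m \<longleftrightarrow> m \<in> S \<and> (\<forall>s\<in>S. uinner U (\<lambda>n. v n - m n) s = 0)"

definition ue_restriction :: "nat filter \<Rightarrow> (nat \<Rightarrow> 'a::complex_inner \<Rightarrow> 'a) \<Rightarrow> ('a \<Rightarrow> 'a) \<Rightarrow> bool" where
  "ue_restriction U T B \<longleftrightarrow> (\<exists>S W. closed_usubspace U S \<and> uinvariant U T S
      \<and> unitary_onto U S W \<and> (\<forall>x. ueq U (uop T (W x)) (W (B x))))"

definition ue_compression :: "nat filter \<Rightarrow> (nat \<Rightarrow> 'a::complex_inner \<Rightarrow> 'a) \<Rightarrow> ('a \<Rightarrow> 'a) \<Rightarrow> bool" where
  "ue_compression U T B \<longleftrightarrow> (\<exists>S W. closed_usubspace U S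
      \<and> unitary_onto U S W \<and> (\<forall>x. uproj U S (uop T (W x)) (W (B x))))"

definition ue_reducing_part :: "nat filter \<Rightarrow> (nat \<Rightarrow> 'a::complex_inner \<Rightarrow> 'a) \<Rightarrow> ('a \<Rightarrow> 'a) \<Rightarrow> bool" where
  "ue_reducing_part U T B \<longleftrightarrow> (\<exists>S W. closed_usubspace U S \<and> uinvariant U T S
      \<and> uinvariant_adj U T S
      \<and> unitary_onto U S W \<and> (\<forall>x. ueq U (uop T (W x)) (W (B x))))"

end

theory Submission
  imports Defs
begin

text \<open>
  Embed \<open>H\<close> diagonally, \<open>W x = (x, x, \<dots>)\<^sub>U\<close>: this is an isometry onto the subspace \<open>M\<close> of
  classes of \<open>U\<close>-convergent bounded sequences, which is closed because \<open>H\<close> is complete.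
  If \<open>T\<^sub>n \<rightarrow> B\<close> strongly, the uniform boundedness principle bounds \<open>sup \<parallel>T\<^sub>n\<parallel>\<close>, so
  \<open>T\<^sub>n s\<^sub>n \<rightarrow> B y\<close> along \<open>U\<close> whenever \<open>s\<^sub>n \<rightarrow> y\<close>: \<open>M\<close> is invariant and \<open>(T\<^sub>n)\<^sub>U W = W B\<close>.
  If \<open>T\<^sub>n \<rightarrow> B\<close> weakly, then \<open>\<langle>T\<^sub>n x - B x, s\<^sub>n\<rangle> \<rightarrow> 0\<close> along \<open>U\<close> for every \<open>s \<in> M\<close>
  (the \<open>T\<^sub>n x\<close> are bounded, again by uniform boundedness), so \<open>W B x\<close> is the projection of
  \<open>(T\<^sub>n)\<^sub>U W x\<close> onto \<open>M\<close>. If both \<open>T\<^sub>n \<rightarrow> B\<close> and \<open>T\<^sub>n\<^sup>* \<rightarrow> B\<^sup>*\<close> strongly, then also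
  \<open>\<langle>T\<^sub>n v\<^sub>n, s\<^sub>n\<rangle> - \<langle>v\<^sub>n, B\<^sup>* y\<rangle> \<rightarrow> 0\<close> along \<open>U\<close>, so \<open>((T\<^sub>n)\<^sub>U)\<^sup>* s = W B\<^sup>* y \<in> M\<close> and \<open>M\<close> reduces
  \<open>(T\<^sub>n)\<^sub>U\<close>.
\<close>

section \<open>Complex inner product spaces\<close>

lemma scaleC_minus1: "scaleC (-1) x = - (x::'a::complex_inner)"
  by (metis scaleR_scaleC scaleR_minus1_left of_real_1 of_real_minus)

lemma cinner_add_right: "cinner (x::'a::complex_inner) (y + z) = cinner x y + cinner x z"
  by (metis cinner_commute cinner_add_left complex_cnj_add complex_cnj_cnj)

lemma cinner_scaleC_right: "cinner (x::'a::complex_inner) (scaleC a y) = cnj a * cinner x y"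
  by (metis cinner_commute cinner_scaleC_left complex_cnj_mult complex_cnj_cnj)

lemma power2_norm_eq_cinner: "(norm (x::'a::complex_inner))\<^sup>2 = Re (cinner x x)"
proof -
  have "0 \<le> Re (cinner x x)"
    using norm_ge_zero[of x] by (simp add: norm_eq_sqrt_cinner real_sqrt_ge_0_iff)
  then show ?thesis by (simp add: norm_eq_sqrt_cinner)
qed

lemma cinner_self: "cinner (x::'a::complex_inner) x = complex_of_real ((norm x)\<^sup>2)"
  by (simp add: complex_eq_iff power2_norm_eq_cinner cinner_self_real)

lemma norm_scaleC: "norm (scaleC c (x::'a::complex_inner)) = cmod c * norm x"
proof -
  have "(norm (scaleC c x))\<^sup>2 = Re (c * cnj c * cinner x x)"
    by (simp add: power2_norm_eq_cinner cinner_scaleC_left cinner_scaleC_right mult.assoc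
        cinner_self_real algebra_simps)
  also have "\<dots> = (cmod c * norm x)\<^sup>2"
    by (simp add: cinner_self complex_mult_cnj power_mult_distrib cmod_power2 flip: of_real_mult)
  finally show ?thesis
    by (metis norm_ge_zero power2_eq_imp_eq mult_nonneg_nonneg)
qed

lemma power2_norm_add:
  "(norm (x + y::'a::complex_inner))\<^sup>2 = (norm x)\<^sup>2 + (norm y)\<^sup>2 + 2 * Re (cinner x y)"
proof -
  have "(norm (x + y))\<^sup>2 = Re (cinner x x + cinner x y + (cinner y x + cinner y y))"
    by (simp add: power2_norm_eq_cinner cinner_add_left cinner_add_right)
  then show ?thesis
    by (subst (asm) cinner_commute[of y x]) (simp add: power2_norm_eq_cinner)
qed

lemma power2_norm_diff:
  "(norm (x - y::'a::complex_inner))\<^sup>2 = (norm x)\<^sup>2 + (norm y)\<^sup>2 - 2 * Re (cinner x y)"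
proof -
  have "(norm (x - y))\<^sup>2 = (norm (x + scaleC (-1) y))\<^sup>2" by (simp add: scaleC_minus1)
  also have "\<dots> = (norm x)\<^sup>2 + (norm y)\<^sup>2 - 2 * Re (cinner x y)"
    by (simp add: power2_norm_add norm_scaleC cinner_scaleC_right)
  finally show ?thesis .
qed

lemma cmod_cinner_le: "cmod (cinner (x::'a::complex_inner) y) \<le> norm x * norm y"
proof (cases "y = 0")
  case True
  then show ?thesis
    using cinner_scaleC_right[of x 0 0] scaleR_scaleC[of 0 "0::'a"] by simp
next
  case False
  define N where "N = (norm y)\<^sup>2"
  have N: "N > 0" using False by (simp add: N_def)
  define c where "c = cinner x y / complex_of_real N"
  have "cnj c * cinner x y = complex_of_real ((cmod (cinner x y))\<^sup>2 / N)"
    by (simp add: c_def complex_mult_cnj cmod_power2 mult.commute)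
  moreover have "(cmod c * norm y)\<^sup>2 = (cmod (cinner x y))\<^sup>2 / N"
  proof -
    have "cmod c = cmod (cinner x y) / N" using N by (simp add: c_def norm_divide)
    then show ?thesis using N by (simp add: N_def power2_eq_square field_simps)
  qed
  moreover have "0 \<le> (norm (x - scaleC c y))\<^sup>2" by simp
  ultimately have "(cmod (cinner x y))\<^sup>2 / N \<le> (norm x)\<^sup>2"
    by (simp add: power2_norm_diff norm_scaleC cinner_scaleC_right)
  then have "(cmod (cinner x y))\<^sup>2 \<le> (norm x * norm y)\<^sup>2"
    using N by (simp add: field_simps N_def power_mult_distrib)
  then show ?thesis by (rule power2_le_imp_le) simp
qed

lemma bounded_bilinear_cinner:
  "bounded_bilinear (cinner :: 'a::complex_inner \<Rightarrow> 'a \<Rightarrow> complex)"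
proof
  show "cinner (scaleR r a) b = scaleR r (cinner a b)" for r :: real and a b :: 'a
    by (simp add: scaleR_scaleC cinner_scaleC_left scaleR_conv_of_real)
  show "cinner a (scaleR r b) = scaleR r (cinner a b)" for r :: real and a b :: 'a
    by (simp add: scaleR_scaleC cinner_scaleC_right scaleR_conv_of_real)
  show "\<exists>K. \<forall>a b :: 'a. norm (cinner a b) \<le> norm a * norm b * K"
    by (intro exI[of _ 1] allI) (simp add: cmod_cinner_le)
qed (simp_all add: cinner_add_left cinner_add_right)

lemmas cinner_zero_right [simp] = bounded_bilinear.zero_right [OF bounded_bilinear_cinner]
lemmas cinner_diff_left = bounded_bilinear.diff_left [OF bounded_bilinear_cinner]
lemmas cinner_diff_right = bounded_bilinear.diff_right [OF bounded_bilinear_cinner]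

lemma tendsto_cinner_Bfun_zero:
  fixes a b :: "'i \<Rightarrow> 'a::complex_inner"
  assumes "Bfun a F" and "(b \<longlongrightarrow> 0) F"
  shows "((\<lambda>i. cinner (a i) (b i)) \<longlongrightarrow> 0) F"
  using bounded_bilinear.Bfun_prod_Zfun[OF bounded_bilinear_cinner assms(1)] assms(2)
  by (simp add: tendsto_Zfun_iff)

lemma bounded_linear_scaleC: "bounded_linear (scaleC c :: 'a::complex_inner \<Rightarrow> 'a)"
proof (rule bounded_linear_intro[of _ "cmod c"])
  show "scaleC c (scaleR r x) = scaleR r (scaleC c x)" for r and x :: 'a
    by (simp add: scaleR_scaleC scaleC_scaleC mult.commute)
qed (simp_all add: scaleC_add_right norm_scaleC mult.commute)

section \<open>Nearest points and the Riesz representation\<close>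

lemma parallelogram_law:
  "(norm (a + b::'a::complex_inner))\<^sup>2 + (norm (a - b))\<^sup>2 = 2 * (norm a)\<^sup>2 + 2 * (norm b)\<^sup>2"
  by (simp add: power2_norm_add power2_norm_diff)

lemma power2_norm_diff_convex_le:
  fixes K :: "'a::complex_inner set"
  assumes "convex K" "q \<in> K" "q' \<in> K" and lower: "\<And>k. k \<in> K \<Longrightarrow> d \<le> norm (u - k)" and "0 \<le> d"
  shows "(norm (q - q'))\<^sup>2 \<le> 2 * (norm (u - q))\<^sup>2 + 2 * (norm (u - q'))\<^sup>2 - 4 * d\<^sup>2"
proof -
  have "scaleR (1/2) q + scaleR (1/2) q' \<in> K"
    using assms(1-3) by (rule convexD) auto
  then have "2 * d \<le> 2 * norm (u - (scaleR (1/2) q + scaleR (1/2) q'))"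
    using lower by simp
  also have "\<dots> = norm (scaleR 2 (u - (scaleR (1/2) q + scaleR (1/2) q')))" by simp
  also have "\<dots> = norm ((u - q) + (u - q'))"
    by (simp add: scaleR_right_diff_distrib scaleR_right_distrib scaleR_2 algebra_simps)
  finally have "(2 * d)\<^sup>2 \<le> (norm ((u - q) + (u - q')))\<^sup>2"
    using \<open>0 \<le> d\<close> by (intro power_mono) auto
  then show ?thesis
    using parallelogram_law[of "u - q" "u - q'"] by (simp add: norm_minus_commute power_mult_distrib)
qed

lemma convex_closed_nearest_point:
  fixes K :: "'a::{complex_inner,complete_space} set"
  assumes "closed K" "convex K" "K \<noteq> {}"
  obtains p where "p \<in> K" "\<And>k. k \<in> K \<Longrightarrow> norm (u - p) \<le> norm (u - k)"
proof -
  define d where "d = (INF k\<in>K. norm (u - k))"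
  have bdd: "bdd_below ((\<lambda>k. norm (u - k)) ` K)" by (rule bdd_belowI[of _ 0]) auto
  have lower: "d \<le> norm (u - k)" if "k \<in> K" for k
    unfolding d_def using bdd that by (rule cINF_lower)
  have "0 \<le> d" unfolding d_def using assms(3) by (intro cINF_greatest) auto
  have "\<exists>q\<in>K. norm (u - q) < d + inverse (Suc k)" for k :: nat
    using cINF_less_iff[OF assms(3) bdd, of "d + inverse (Suc k)"] by (simp add: d_def)
  then obtain q where qK: "\<And>k. q k \<in> K" and qd: "\<And>k. norm (u - q k) < d + inverse (Suc k)"
    by metis
  have dist_lim: "(\<lambda>k. norm (u - q k)) \<longlonglongrightarrow> d"
  proof (rule tendsto_sandwich)
    show "\<forall>\<^sub>F k in sequentially. d \<le> norm (u - q k)" using lower qK by simp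
    show "\<forall>\<^sub>F k in sequentially. norm (u - q k) \<le> d + inverse (Suc k)"
      using qd by (intro always_eventually allI less_imp_le)
    show "(\<lambda>k. d + inverse (Suc k)) \<longlonglongrightarrow> d"
      using tendsto_add[OF tendsto_const LIMSEQ_inverse_real_of_nat] by simp
  qed simp
  have "Cauchy q"
  proof (rule metric_CauchyI)
    fix e :: real assume "e > 0"
    have "(\<lambda>k. (norm (u - q k))\<^sup>2) \<longlonglongrightarrow> d\<^sup>2" by (intro tendsto_power dist_lim)
    then have "\<forall>\<^sub>F k in sequentially. (norm (u - q k))\<^sup>2 < d\<^sup>2 + e\<^sup>2 / 4"
      using \<open>e > 0\<close> by (intro order_tendstoD) auto
    then obtain N where N: "\<And>k. k \<ge> N \<Longrightarrow> (norm (u - q k))\<^sup>2 < d\<^sup>2 + e\<^sup>2 / 4"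
      by (auto simp: eventually_sequentially)
    have "dist (q m) (q n) < e" if "m \<ge> N" "n \<ge> N" for m n
    proof -
      have "(norm (q m - q n))\<^sup>2 < e\<^sup>2"
        using power2_norm_diff_convex_le[OF assms(2) qK qK lower \<open>0 \<le> d\<close>, of m n] N[OF \<open>m \<ge> N\<close>]
          N[OF \<open>n \<ge> N\<close>] by simp
      then show ?thesis using \<open>e > 0\<close> by (simp add: dist_norm power_less_imp_less_base)
    qed
    then show "\<exists>M. \<forall>m\<ge>M. \<forall>n\<ge>M. dist (q m) (q n) < e" by blast
  qed
  then obtain p where qp: "q \<longlonglongrightarrow> p" by (metis Cauchy_convergent_iff convergent_def)
  have "p \<in> K" using closed_sequentially[OF assms(1)] qK qp by blast
  moreover have "norm (u - p) = d"
    using LIMSEQ_unique[OF tendsto_norm[OF tendsto_diff[OF tendsto_const qp]] dist_lim] .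
  ultimately show ?thesis using that lower by auto
qed

lemma cinner_eq_0_if_minimal_norm:
  fixes w k :: "'a::complex_inner"
  assumes "\<And>c. norm w \<le> norm (w - scaleC c k)"
  shows "cinner w k = 0"
proof (cases "k = 0")
  case True then show ?thesis by simp
next
  case False
  define N where "N = (norm k)\<^sup>2"
  have N: "N > 0" using False by (simp add: N_def)
  define a where "a = cinner w k"
  define c where "c = a / complex_of_real N"
  have "(norm w)\<^sup>2 \<le> (norm (w - scaleC c k))\<^sup>2" using assms by (intro power_mono) auto
  also have "\<dots> = (norm w)\<^sup>2 + (cmod c * norm k)\<^sup>2 - 2 * Re (cnj c * a)"
    by (simp add: power2_norm_diff norm_scaleC cinner_scaleC_right a_def)
  also have "(cmod c * norm k)\<^sup>2 = (cmod a)\<^sup>2 / N"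
  proof -
    have "cmod c = cmod a / N" using N by (simp add: c_def norm_divide)
    then show ?thesis using N by (simp add: N_def power2_eq_square field_simps)
  qed
  also have "cnj c * a = complex_of_real ((cmod a)\<^sup>2 / N)"
    by (simp add: c_def complex_mult_cnj cmod_power2 mult.commute)
  finally have "(cmod a)\<^sup>2 / N \<le> 0" by simp
  then show ?thesis using N by (simp add: a_def divide_le_0_iff)
qed

theorem complex_Riesz_representation:
  fixes f :: "'a::{complex_inner,complete_space} \<Rightarrow> complex"
  assumes bl: "bounded_linear f" and hom: "\<And>c x. f (scaleC c x) = c * f x"
  shows "\<exists>z. \<forall>x. f x = cinner x z"
proof (cases "\<forall>x. f x = 0")
  case True then show ?thesis by (intro exI[of _ 0]) simp
next
  case False
  then obtain u where "f u \<noteq> 0" by blast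
  define K where "K = f -` {0}"
  have "closed K"
    unfolding K_def by (intro continuous_closed_vimage linear_continuous_at bl) simp
  moreover have "convex K"
    unfolding K_def by (intro convex_linear_vimage bounded_linear.linear[OF bl]) simp
  moreover have "0 \<in> K" by (simp add: K_def linear_0[OF bounded_linear.linear[OF bl]])
  ultimately obtain p where pK: "p \<in> K" and nearest: "\<And>k. k \<in> K \<Longrightarrow> norm (u - p) \<le> norm (u - k)"
    by (metis convex_closed_nearest_point empty_iff)
  define w where "w = u - p"
  have fw: "f w = f u" using pK by (simp add: w_def K_def linear_diff[OF bounded_linear.linear[OF bl]])
  have orth: "cinner w k = 0" if "k \<in> K" for k
  proof (rule cinner_eq_0_if_minimal_norm)
    fix c
    have "p + scaleC c k \<in> K"
      using pK that by (simp add: K_def hom linear_add[OF bounded_linear.linear[OF bl]])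
    then show "norm w \<le> norm (w - scaleC c k)"
      using nearest by (simp add: w_def algebra_simps)
  qed
  define z where "z = scaleC (cnj (f w) / complex_of_real ((norm w)\<^sup>2)) w"
  have "f x = cinner x z" for x
  proof -
    define v where "v = x - scaleC (f x / f w) w"
    have "v \<in> K"
      using fw \<open>f u \<noteq> 0\<close> by (simp add: K_def v_def hom linear_diff[OF bounded_linear.linear[OF bl]])
    then have "cinner v w = 0" using orth cinner_commute[of v w] by simp
    then have "cinner x w = f x / f w * complex_of_real ((norm w)\<^sup>2)"
      by (simp add: v_def cinner_diff_left cinner_scaleC_left cinner_self)
    moreover have "w \<noteq> 0" using fw \<open>f u \<noteq> 0\<close> linear_0[OF bounded_linear.linear[OF bl]] by auto
    ultimately show ?thesis using fw \<open>f u \<noteq> 0\<close> by (simp add: z_def cinner_scaleC_right)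
  qed
  then show ?thesis by blast
qed

lemma cinner_cadjoint:
  fixes T :: "'a::{complex_inner,complete_space} \<Rightarrow> 'a"
  assumes "cblinear T"
  shows "cinner (T x) y = cinner x (cadjoint T y)"
proof -
  have "\<exists>z. \<forall>x. cinner (T x) y = cinner x z" for y
  proof (rule complex_Riesz_representation)
    show "bounded_linear (\<lambda>x. cinner (T x) y)"
      using assms unfolding cblinear_def
      by (intro bounded_linear_compose[OF bounded_bilinear.bounded_linear_left[OF bounded_bilinear_cinner]])
        simp
    show "cinner (T (scaleC c x)) y = c * cinner (T x) y" for c x
      using assms by (simp add: cblinear_def cinner_scaleC_left)
  qed
  then obtain A where A: "\<And>x y. cinner (T x) y = cinner x (A y)" by metis
  have "A' = A" if A': "\<forall>x y. cinner (T x) y = cinner x (A' y)" for A'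
  proof
    fix y
    have "cinner x (A' y - A y) = 0" for x using A A' by (simp add: cinner_diff_right)
    from this[of "A' y - A y"] show "A' y = A y" by (simp add: cinner_self)
  qed
  then have "cadjoint T = A" unfolding cadjoint_def using A by (intro the_equality) auto
  then show ?thesis by (simp add: A)
qed

section \<open>Uniform boundedness\<close>

lemma pointwise_bounded_imp_bounded_on_ball:
  fixes p :: "'i \<Rightarrow> 'a::{real_normed_vector,complete_space} \<Rightarrow> real"
  assumes cont: "\<And>i. continuous_on UNIV (p i)" and bnd: "\<And>x. \<exists>K. \<forall>i. p i x \<le> K"
  obtains r x0 k where "r > 0" "\<And>i x. x \<in> ball x0 r \<Longrightarrow> p i x \<le> k"
proof -
  define F where "F k = {x. \<forall>i. p i x \<le> real k}" for k :: nat
  have "closed (F k)" for k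
    unfolding F_def Collect_all_eq
    by (intro closed_INT ballI closed_Collect_le cont continuous_on_const)
  moreover have "\<Union>(range F) = UNIV"
  proof (intro set_eqI iffI UNIV_I)
    fix x
    obtain K where K: "\<And>i. p i x \<le> K" using bnd by blast
    have "p i x \<le> real (nat \<lceil>K\<rceil>)" for i
      using K[of i] real_nat_ceiling_ge[of K] by linarith
    then have "x \<in> F (nat \<lceil>K\<rceil>)" by (simp add: F_def)
    then show "x \<in> \<Union>(range F)" by blast
  qed
  ultimately have "\<exists>k. interior (F k) \<noteq> {}"
    using Baire_category_alt[of euclidean "range F"]
    by (auto simp: completely_metrizable_space_euclidean closed_closedin[symmetric])
  then obtain k x0 where "x0 \<in> interior (F k)" by blast
  then obtain r where "r > 0" and ball: "ball x0 r \<subseteq> F k" by (auto simp: mem_interior)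
  show ?thesis
  proof (rule that[OF \<open>r > 0\<close>])
    show "p i x \<le> real k" if "x \<in> ball x0 r" for i x using ball that by (auto simp: F_def)
  qed
qed

theorem uniform_boundedness_seminorms:
  fixes p :: "'i \<Rightarrow> 'a::{real_normed_vector,complete_space} \<Rightarrow> real"
  assumes cont: "\<And>i. continuous_on UNIV (p i)"
    and sub: "\<And>i x y. p i (x + y) \<le> p i x + p i y"
    and hom: "\<And>i r x. p i (scaleR r x) = \<bar>r\<bar> * p i x"
    and bnd: "\<And>x. \<exists>K. \<forall>i. p i x \<le> K"
  shows "\<exists>M\<ge>0. \<forall>i x. p i x \<le> M * norm x"
proof -
  obtain r x0 k where r: "r > 0" and ball: "\<And>i x. x \<in> ball x0 r \<Longrightarrow> p i x \<le> k"
    using pointwise_bounded_imp_bounded_on_ball[OF cont bnd] by metis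
  have p_minus: "p i (- x) = p i x" for i x using hom[of i "-1" x] by simp
  have "0 \<le> p i x" for i x
    using sub[of i x "- x"] hom[of i 0 x] p_minus[of i x] by simp
  then have "k \<ge> 0" using ball[of x0 undefined] r by (meson centre_in_ball order.trans)
  have small: "p i z \<le> 2 * k" if "norm z < r" for i z
  proof -
    have "p i z \<le> p i (x0 + z) + p i (- x0)"
      using sub[of i "x0 + z" "- x0"] by simp
    moreover have "x0 + z \<in> ball x0 r" "x0 \<in> ball x0 r" using that r by (auto simp: dist_norm)
    ultimately show ?thesis using ball[of "x0 + z" i] ball[of x0 i] p_minus[of i x0] by linarith
  qed
  have "p i x \<le> (4 * k / r) * norm x" for i x
  proof (cases "x = 0")
    case True then show ?thesis using hom[of i 0 0] by simp
  next
    case False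
    then have nx: "norm x > 0" by simp
    have "r / (2 * norm x) * p i x = p i (scaleR (r / (2 * norm x)) x)"
      using r nx by (simp add: hom)
    also have "\<dots> \<le> 2 * k" using r nx by (intro small) simp
    finally show ?thesis using r nx by (simp add: field_simps)
  qed
  then show ?thesis using \<open>k \<ge> 0\<close> r by (intro exI[of _ "4 * k / r"]) auto
qed

corollary uniform_boundedness:
  fixes T :: "'i \<Rightarrow> 'a::{real_normed_vector,complete_space} \<Rightarrow> 'b::real_normed_vector"
  assumes bl: "\<And>i. bounded_linear (T i)" and bnd: "\<And>x. \<exists>K. \<forall>i. norm (T i x) \<le> K"
  shows "\<exists>M\<ge>0. \<forall>i x. norm (T i x) \<le> M * norm x"
proof (rule uniform_boundedness_seminorms[OF _ _ _ bnd])
  show "continuous_on UNIV (\<lambda>x. norm (T i x))" for i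
    by (intro continuous_on_norm linear_continuous_on bl)
  show "norm (T i (x + y)) \<le> norm (T i x) + norm (T i y)" for i x y
    by (simp add: linear_add[OF bounded_linear.linear[OF bl]] norm_triangle_ineq)
  show "norm (T i (scaleR r x)) = \<bar>r\<bar> * norm (T i x)" for i r x
    by (simp add: linear_scale[OF bounded_linear.linear[OF bl]])
qed

corollary weakly_bounded_imp_bounded:
  fixes a :: "'i \<Rightarrow> 'a::{complex_inner,complete_space}"
  assumes bnd: "\<And>y. \<exists>K. \<forall>i. cmod (cinner (a i) y) \<le> K"
  shows "\<exists>M. \<forall>i. norm (a i) \<le> M"
proof -
  obtain M where "M \<ge> 0" and M: "\<And>i y. cmod (cinner (a i) y) \<le> M * norm y"
    using uniform_boundedness[OF bounded_bilinear.bounded_linear_right[OF bounded_bilinear_cinner] bnd]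
    by blast
  have "norm (a i) \<le> M" for i
  proof (cases "a i = 0")
    case False
    have "norm (a i) * norm (a i) \<le> M * norm (a i)"
      using M[of i "a i"] by (simp add: cinner_self power2_eq_square norm_mult)
    then show ?thesis using False by simp
  qed (use \<open>M \<ge> 0\<close> in simp)
  then show ?thesis by blast
qed

lemma tendsto_equibounded_apply:
  fixes T :: "'i \<Rightarrow> 'a::real_normed_vector \<Rightarrow> 'b::real_normed_vector"
  assumes lin: "\<And>i. linear (T i)" and M: "\<And>i x. norm (T i x) \<le> M * norm x"
    and s: "(s \<longlongrightarrow> y) F" and Ty: "((\<lambda>i. T i y) \<longlongrightarrow> b) F"
  shows "((\<lambda>i. T i (s i)) \<longlongrightarrow> b) F"
proof -
  have "((\<lambda>i. T i (s i - y)) \<longlongrightarrow> 0) F"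
  proof (rule Lim_null_comparison)
    show "\<forall>\<^sub>F i in F. norm (T i (s i - y)) \<le> M * norm (s i - y)" by (simp add: M)
    show "((\<lambda>i. M * norm (s i - y)) \<longlongrightarrow> 0) F"
      using s by (intro tendsto_mult_right_zero) (simp add: tendsto_norm_zero_iff LIM_zero_iff)
  qed
  from tendsto_add[OF this Ty] show ?thesis by (simp add: linear_diff[OF lin])
qed

lemma sot_conv_equibounded:
  fixes T :: "nat \<Rightarrow> 'a::{complex_inner,complete_space} \<Rightarrow> 'a"
  assumes "\<And>n. cblinear (T n)" and "sot_conv T B"
  shows "\<exists>M\<ge>0. \<forall>n x. norm (T n x) \<le> M * norm x"
proof (rule uniform_boundedness)
  show "bounded_linear (T n)" for n using assms(1) by (simp add: cblinear_def)
  show "\<exists>K. \<forall>n. norm (T n x) \<le> K" for x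
    using assms(2) convergent_imp_Bseq[of "\<lambda>n. T n x"] unfolding sot_conv_def Bseq_def convergent_def
    by blast
qed

lemma wot_conv_bounded:
  fixes T :: "nat \<Rightarrow> 'a::{complex_inner,complete_space} \<Rightarrow> 'a"
  assumes "wot_conv T B"
  shows "\<exists>A. \<forall>n. norm (T n x) \<le> A"
proof (rule weakly_bounded_imp_bounded)
  show "\<exists>K. \<forall>n. cmod (cinner (T n x) z) \<le> K" for z
    using assms convergent_imp_Bseq[of "\<lambda>n. cinner (T n x) z"]
    unfolding wot_conv_def Bseq_def convergent_def by blast
qed

section \<open>Limits along a free ultrafilter\<close>

lemma free_ultrafilter_le_sequentially:
  assumes "free_ultrafilter U"
  shows "U \<le> sequentially"
proof (rule filter_leI)
  fix P assume "eventually P sequentially"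
  then obtain N where N: "\<And>n. n \<ge> N \<Longrightarrow> P n" by (auto simp: eventually_sequentially)
  have "eventually (\<lambda>n. \<forall>m\<in>{..<N}. n \<noteq> m) U"
    using assms by (intro eventually_ball_finite) (auto simp: free_ultrafilter_def)
  then show "eventually P U"
    by (rule eventually_mono) (metis N lessThan_iff not_le)
qed

lemma Lim_free_ultrafilter: "free_ultrafilter U \<Longrightarrow> (f \<longlongrightarrow> L) U \<Longrightarrow> Lim U f = L"
  by (simp add: free_ultrafilter_def tendsto_Lim)

lemma ultrafilter_limit_exists:
  fixes f :: "nat \<Rightarrow> 'b::heine_borel"
  assumes U: "free_ultrafilter U" and "bounded (range f)"
  shows "\<exists>L. (f \<longlongrightarrow> L) U"
proof -
  have "filtermap f U \<noteq> bot" using U by (simp add: free_ultrafilter_def filtermap_bot_iff)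
  moreover have "eventually (\<lambda>x. x \<in> closure (range f)) (filtermap f U)"
    by (simp add: eventually_filtermap closure_subset[THEN subsetD])
  moreover have "compact (closure (range f))" using assms(2) by simp
  ultimately obtain L where L: "inf (nhds L) (filtermap f U) \<noteq> bot"
    unfolding compact_filter by blast
  have "eventually (\<lambda>n. f n \<in> S) U" if "open S" "L \<in> S" for S
  proof (rule ccontr)
    assume "\<not> eventually (\<lambda>n. f n \<in> S) U"
    then have "eventually (\<lambda>x. x \<notin> S) (filtermap f U)"
      using U by (auto simp: free_ultrafilter_def eventually_filtermap)
    moreover have "eventually (\<lambda>x. x \<in> S) (nhds L)" using that by (rule eventually_nhds_in_open)
    ultimately have "eventually (\<lambda>x. False) (inf (nhds L) (filtermap f U))"
      using eventually_inf[of "\<lambda>x. False" "nhds L" "filtermap f U"] by blast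
    then show False using L by (simp add: eventually_False)
  qed
  then show ?thesis by (blast intro: topological_tendstoI)
qed

lemma convergent_if_approximable:
  fixes x :: "'i \<Rightarrow> 'a::complete_space"
  assumes approx: "\<And>e. e > 0 \<Longrightarrow> \<exists>y. eventually (\<lambda>n. dist (x n) y < e) F"
  shows "\<exists>c. (x \<longlongrightarrow> c) F"
proof -
  have "cauchy_filter (filtermap x F)"
    unfolding cauchy_filter_metric_filtermap
  proof (intro allI impI)
    fix e :: real assume "e > 0"
    then obtain y where "eventually (\<lambda>n. dist (x n) y < e / 2) F" using approx[of "e / 2"] by auto
    moreover have "dist (x a) (x b) < e" if "dist (x a) y < e / 2" "dist (x b) y < e / 2" for a b
      using dist_triangle_half_l[OF that] .
    ultimately show "\<exists>P. eventually P F \<and> (\<forall>a b. P a \<and> P b \<longrightarrow> dist (x a) (x b) < e)" by blast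
  qed
  then show ?thesis
    by (auto simp: convergent_filter_iff_cauchy[symmetric] convergent_filter_iff filterlim_def)
qed

lemma ueq_sym: "ueq U x y \<Longrightarrow> ueq U y x"
  by (simp add: ueq_def norm_minus_commute)

lemma ueq_const_iff: "ueq U s (\<lambda>_. y) \<longleftrightarrow> (s \<longlongrightarrow> y) U"
  by (simp add: ueq_def tendsto_norm_zero_iff LIM_zero_iff)

lemma ueq_tendsto: "ueq U s t \<Longrightarrow> (s \<longlongrightarrow> y) U \<Longrightarrow> (t \<longlongrightarrow> y) U"
  unfolding ueq_def tendsto_norm_zero_iff
  by (drule (1) tendsto_diff) simp

lemma eventually_less_if_unorm_less:
  assumes "free_ultrafilter U" "lbounded z" "unorm U z < e"
  shows "eventually (\<lambda>n. norm (z n) < e) U"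
proof -
  have "bounded (range (\<lambda>n. norm (z n)))"
    using assms(2) by (simp add: lbounded_def bounded_norm_comp)
  then obtain L where L: "((\<lambda>n. norm (z n)) \<longlongrightarrow> L) U"
    using ultrafilter_limit_exists[OF assms(1)] by blast
  then have "L < e" using assms(1,3) by (simp add: unorm_def Lim_free_ultrafilter)
  then show ?thesis using L by (intro order_tendstoD)
qed

lemma lbounded_iff: "lbounded x \<longleftrightarrow> (\<exists>K. \<forall>n. norm (x n) \<le> K)"
  by (auto simp: lbounded_def bounded_iff)

lemma lbounded_add: "lbounded s \<Longrightarrow> lbounded t \<Longrightarrow> lbounded (\<lambda>n. s n + t n)"
  unfolding lbounded_iff by (meson add_mono norm_triangle_ineq order.trans)

lemma lbounded_diff: "lbounded s \<Longrightarrow> lbounded t \<Longrightarrow> lbounded (\<lambda>n. s n - t n)"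
  unfolding lbounded_iff by (meson add_mono norm_triangle_ineq4 order.trans)

lemma lbounded_imp_Bfun: "lbounded s \<Longrightarrow> Bfun s F"
  unfolding lbounded_iff by (blast intro: BfunI always_eventually)

lemma lbounded_equibounded_apply:
  assumes "M \<ge> 0" and M: "\<And>n x. norm (T n x) \<le> M * norm x" and "lbounded s"
  shows "lbounded (\<lambda>n. T n (s n))"
proof -
  obtain K where "\<And>n. norm (s n) \<le> K" using \<open>lbounded s\<close> by (auto simp: lbounded_iff)
  then have "norm (T n (s n)) \<le> M * K" for n
    using M[of n "s n"] mult_left_mono[of "norm (s n)" K M] \<open>M \<ge> 0\<close> by fastforce
  then show ?thesis unfolding lbounded_iff by blast
qed

lemma Lim_free_ultrafilter_diff_zero:
  fixes f g :: "nat \<Rightarrow> 'b::{heine_borel,real_normed_vector}"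
  assumes U: "free_ultrafilter U" and "bounded (range g)" and "((\<lambda>n. f n - g n) \<longlongrightarrow> 0) U"
  shows "Lim U f = Lim U g"
proof -
  obtain L where L: "(g \<longlongrightarrow> L) U" using ultrafilter_limit_exists[OF U assms(2)] by blast
  from tendsto_add[OF assms(3) L] have "(f \<longlongrightarrow> L) U" by simp
  with L show ?thesis using U by (simp add: Lim_free_ultrafilter)
qed

section \<open>The diagonal subspace of the ultrapower\<close>

text \<open>The image of \<open>H\<close> under the diagonal embedding \<open>x \<mapsto> (x, x, \<dots>)\<^sub>U\<close>.\<close>

definition diagonal_usubspace :: "nat filter \<Rightarrow> (nat \<Rightarrow> 'a::complex_inner) set" where
  "diagonal_usubspace U = {s. lbounded s \<and> (\<exists>y. (s \<longlongrightarrow> y) U)}"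

lemma const_in_diagonal_usubspace: "(\<lambda>_. x) \<in> diagonal_usubspace U"
  by (auto simp: diagonal_usubspace_def lbounded_def)

lemma closed_usubspace_diagonal:
  fixes U :: "nat filter"
  assumes U: "free_ultrafilter U"
  shows "closed_usubspace U (diagonal_usubspace U :: (nat \<Rightarrow> 'a::{complex_inner,complete_space}) set)"
  unfolding closed_usubspace_def
proof (intro conjI ballI allI impI)
  show "(\<lambda>n. 0) \<in> diagonal_usubspace U" by (rule const_in_diagonal_usubspace)
next
  fix s t :: "nat \<Rightarrow> 'a" assume "s \<in> diagonal_usubspace U" "t \<in> diagonal_usubspace U"
  then show "(\<lambda>n. s n + t n) \<in> diagonal_usubspace U"
    by (auto simp: diagonal_usubspace_def lbounded_add intro: tendsto_add)
next
  fix s :: "nat \<Rightarrow> 'a" and c assume "s \<in> diagonal_usubspace U"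
  moreover have "range (\<lambda>n. scaleC c (s n)) = scaleC c ` range s" by auto
  ultimately show "(\<lambda>n. scaleC c (s n)) \<in> diagonal_usubspace U"
    by (auto simp: diagonal_usubspace_def lbounded_def bounded_linear_scaleC
        intro: bounded_linear_image bounded_linear.tendsto[OF bounded_linear_scaleC])
next
  fix s t :: "nat \<Rightarrow> 'a" assume "s \<in> diagonal_usubspace U" "lbounded t \<and> ueq U s t"
  then show "t \<in> diagonal_usubspace U" by (auto simp: diagonal_usubspace_def intro: ueq_tendsto)
next
  fix x :: "nat \<Rightarrow> 'a"
  assume x: "lbounded x \<and> (\<forall>e>0. \<exists>s\<in>diagonal_usubspace U. unorm U (\<lambda>n. x n - s n) < e)"
  have "\<exists>y. eventually (\<lambda>n. dist (x n) y < e) U" if "e > 0" for e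
  proof -
    obtain s where s: "s \<in> diagonal_usubspace U" and close: "unorm U (\<lambda>n. x n - s n) < e / 2"
      using x \<open>e > 0\<close> by (meson half_gt_zero)
    have "lbounded (\<lambda>n. x n - s n)"
      using x s by (simp add: diagonal_usubspace_def lbounded_diff)
    from eventually_less_if_unorm_less[OF U this close]
    have "eventually (\<lambda>n. dist (x n) (s n) < e / 2) U" by (simp add: dist_norm)
    moreover obtain y where "(s \<longlongrightarrow> y) U" using s by (auto simp: diagonal_usubspace_def)
    then have "eventually (\<lambda>n. dist (s n) y < e / 2) U"
      by (rule tendstoD) (use \<open>e > 0\<close> in simp)
    ultimately have "eventually (\<lambda>n. dist (x n) y < e) U"
      by eventually_elim (rule dist_triangle_half_l, auto simp: dist_commute)
    then show ?thesis ..
  qed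
  then show "x \<in> diagonal_usubspace U"
    using x convergent_if_approximable by (auto simp: diagonal_usubspace_def)
qed (simp add: diagonal_usubspace_def)

lemma unitary_onto_diagonal:
  assumes U: "free_ultrafilter U"
  shows "unitary_onto U (diagonal_usubspace U) (\<lambda>x (_::nat). x :: 'a::complex_inner)"
  unfolding unitary_onto_def
proof (intro conjI allI ballI)
  show "uinner U (\<lambda>_. x) (\<lambda>_. y) = cinner x y" for x y :: 'a
    unfolding uinner_def using U by (intro Lim_free_ultrafilter tendsto_const)
  show "\<exists>x. ueq U (\<lambda>_. x) s" if "s \<in> diagonal_usubspace U" for s :: "nat \<Rightarrow> 'a"
    using that by (auto simp: diagonal_usubspace_def) (metis ueq_const_iff ueq_sym)
qed (simp_all add: const_in_diagonal_usubspace ueq_def)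

lemma sot_conv_tendsto_free_ultrafilter:
  "free_ultrafilter U \<Longrightarrow> sot_conv T B \<Longrightarrow> ((\<lambda>n. T n x) \<longlongrightarrow> B x) U"
  unfolding sot_conv_def by (blast intro: tendsto_mono[OF free_ultrafilter_le_sequentially])

lemma uinvariant_diagonal:
  fixes T :: "nat \<Rightarrow> 'a::{complex_inner,complete_space} \<Rightarrow> 'a"
  assumes U: "free_ultrafilter U" and T: "\<And>n. cblinear (T n)" and sot: "sot_conv T B"
  shows "uinvariant U T (diagonal_usubspace U)"
  unfolding uinvariant_def
proof
  obtain M where "M \<ge> 0" and M: "\<And>n x. norm (T n x) \<le> M * norm x"
    using sot_conv_equibounded[OF T sot] by blast
  have lin: "linear (T n)" for n using T by (simp add: cblinear_def bounded_linear.linear)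
  fix s :: "nat \<Rightarrow> 'a" assume "s \<in> diagonal_usubspace U"
  then obtain y where "lbounded s" and s: "(s \<longlongrightarrow> y) U"
    by (auto simp: diagonal_usubspace_def)
  have "(uop T s \<longlongrightarrow> B y) U"
    unfolding uop_def
    using tendsto_equibounded_apply[OF lin M s sot_conv_tendsto_free_ultrafilter[OF U sot]] .
  moreover have "lbounded (uop T s)"
    unfolding uop_def using \<open>M \<ge> 0\<close> M \<open>lbounded s\<close> by (rule lbounded_equibounded_apply)
  ultimately show "uop T s \<in> diagonal_usubspace U"
    by (auto simp: diagonal_usubspace_def)
qed

theorem ue_restriction_if_sot_conv:
  fixes T :: "nat \<Rightarrow> 'a::{complex_inner,complete_space} \<Rightarrow> 'a"
  assumes U: "free_ultrafilter U" and T: "\<And>n. cblinear (T n)" and sot: "sot_conv T B"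
  shows "ue_restriction U T B"
proof -
  have "ueq U (uop T (\<lambda>_. x)) (\<lambda>_. B x)" for x
    using sot_conv_tendsto_free_ultrafilter[OF U sot] by (simp add: uop_def ueq_const_iff)
  then show ?thesis
    unfolding ue_restriction_def
    using closed_usubspace_diagonal[OF U] uinvariant_diagonal[OF U T sot] unitary_onto_diagonal[OF U]
    by blast
qed

theorem ue_compression_if_wot_conv:
  fixes T :: "nat \<Rightarrow> 'a::{complex_inner,complete_space} \<Rightarrow> 'a"
  assumes U: "free_ultrafilter U" and wot: "wot_conv T B"
  shows "ue_compression U T B"
proof -
  have "uproj U (diagonal_usubspace U) (uop T (\<lambda>_. x)) (\<lambda>_. B x)" for x
    unfolding uproj_def
  proof (intro conjI ballI)
    fix s :: "nat \<Rightarrow> 'a" assume "s \<in> diagonal_usubspace U"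
    then obtain y where "(s \<longlongrightarrow> y) U" by (auto simp: diagonal_usubspace_def)
    obtain A where A: "\<And>n. norm (T n x) \<le> A" using wot_conv_bounded[OF wot] by blast
    have "norm (T n x - B x) \<le> A + norm (B x)" for n
      using norm_triangle_ineq4[of "T n x" "B x"] A[of n] by linarith
    then have "Bfun (\<lambda>n. T n x - B x) U" by (intro BfunI always_eventually allI)
    moreover have "((\<lambda>n. s n - y) \<longlongrightarrow> 0) U" using \<open>(s \<longlongrightarrow> y) U\<close> by (simp add: LIM_zero)
    ultimately have "((\<lambda>n. cinner (T n x - B x) (s n - y)) \<longlongrightarrow> 0) U"
      by (rule tendsto_cinner_Bfun_zero)
    moreover have "((\<lambda>n. cinner (T n x) y - cinner (B x) y) \<longlongrightarrow> 0) U"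
      using wot by (intro LIM_zero tendsto_mono[OF free_ultrafilter_le_sequentially[OF U]])
        (simp add: wot_conv_def)
    ultimately have "((\<lambda>n. cinner (T n x - B x) (s n - y) + (cinner (T n x) y - cinner (B x) y))
        \<longlongrightarrow> 0) U"
      by (rule tendsto_add_zero)
    moreover have "cinner (T n x - B x) (s n) =
        cinner (T n x - B x) (s n - y) + (cinner (T n x) y - cinner (B x) y)" for n
      by (simp add: cinner_diff_left cinner_diff_right)
    ultimately have "((\<lambda>n. cinner (T n x - B x) (s n)) \<longlongrightarrow> 0) U" by simp
    then show "uinner U (\<lambda>n. uop T (\<lambda>_. x) n - B x) s = 0"
      using U by (simp add: uinner_def uop_def Lim_free_ultrafilter)
  qed (rule const_in_diagonal_usubspace)
  then show ?thesis
    unfolding ue_compression_def using closed_usubspace_diagonal[OF U] unitary_onto_diagonal[OF U]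
    by blast
qed

lemma uinvariant_adj_diagonal:
  fixes T :: "nat \<Rightarrow> 'a::{complex_inner,complete_space} \<Rightarrow> 'a"
  assumes U: "free_ultrafilter U" and T: "\<And>n. cblinear (T n)" and star: "star_sot_conv T B"
  shows "uinvariant_adj U T (diagonal_usubspace U)"
  unfolding uinvariant_adj_def
proof
  have "sot_conv T B" using star by (simp add: star_sot_conv_def)
  obtain M where "M \<ge> 0" and M: "\<And>n x. norm (T n x) \<le> M * norm x"
    using sot_conv_equibounded[OF T \<open>sot_conv T B\<close>] by blast
  fix s :: "nat \<Rightarrow> 'a" assume "s \<in> diagonal_usubspace U"
  then obtain y where "(s \<longlongrightarrow> y) U" by (auto simp: diagonal_usubspace_def)
  define z where "z = cadjoint B y"
  have "uinner U (uop T v) s = uinner U v (\<lambda>_. z)" if "lbounded v" for v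
  proof -
    have "Bfun (\<lambda>n. T n (v n)) U"
      using lbounded_equibounded_apply[OF \<open>M \<ge> 0\<close> M \<open>lbounded v\<close>] by (rule lbounded_imp_Bfun)
    moreover have "((\<lambda>n. s n - y) \<longlongrightarrow> 0) U" using \<open>(s \<longlongrightarrow> y) U\<close> by (simp add: LIM_zero)
    ultimately have "((\<lambda>n. cinner (T n (v n)) (s n - y)) \<longlongrightarrow> 0) U"
      by (rule tendsto_cinner_Bfun_zero)
    moreover have "((\<lambda>n. cadjoint (T n) y - z) \<longlongrightarrow> 0) U"
      using star by (intro LIM_zero tendsto_mono[OF free_ultrafilter_le_sequentially[OF U]])
        (simp add: star_sot_conv_def sot_conv_def z_def)
    with lbounded_imp_Bfun[OF \<open>lbounded v\<close>]
    have "((\<lambda>n. cinner (v n) (cadjoint (T n) y - z)) \<longlongrightarrow> 0) U"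
      by (rule tendsto_cinner_Bfun_zero)
    ultimately have "((\<lambda>n. cinner (T n (v n)) (s n - y) + cinner (v n) (cadjoint (T n) y - z))
        \<longlongrightarrow> 0) U"
      by (rule tendsto_add_zero)
    moreover have "cinner (T n (v n)) (s n) - cinner (v n) z =
        cinner (T n (v n)) (s n - y) + cinner (v n) (cadjoint (T n) y - z)" for n
      by (simp add: cinner_diff_right cinner_cadjoint[OF T])
    ultimately have "((\<lambda>n. cinner (T n (v n)) (s n) - cinner (v n) z) \<longlongrightarrow> 0) U" by simp
    moreover have "bounded (range (\<lambda>n. cinner (v n) z))"
      using \<open>lbounded v\<close> bounded_linear_image[OF _ bounded_bilinear.bounded_linear_left[OF
          bounded_bilinear_cinner], of "range v" z]
      by (simp add: lbounded_def image_image)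
    ultimately show ?thesis
      using Lim_free_ultrafilter_diff_zero[OF U] by (simp add: uinner_def uop_def)
  qed
  then show "\<exists>t\<in>diagonal_usubspace U. \<forall>v. lbounded v \<longrightarrow> uinner U (uop T v) s = uinner U v t"
    using const_in_diagonal_usubspace by blast
qed

theorem ue_reducing_part_if_star_sot_conv:
  fixes T :: "nat \<Rightarrow> 'a::{complex_inner,complete_space} \<Rightarrow> 'a"
  assumes U: "free_ultrafilter U" and T: "\<And>n. cblinear (T n)" and star: "star_sot_conv T B"
  shows "ue_reducing_part U T B"
proof -
  have sot: "sot_conv T B" using star by (simp add: star_sot_conv_def)
  have "ueq U (uop T (\<lambda>_. x)) (\<lambda>_. B x)" for x
    using sot_conv_tendsto_free_ultrafilter[OF U sot] by (simp add: uop_def ueq_const_iff)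
  then show ?thesis
    unfolding ue_reducing_part_def
    using closed_usubspace_diagonal[OF U] uinvariant_diagonal[OF U T sot]
      uinvariant_adj_diagonal[OF U T star] unitary_onto_diagonal[OF U]
    by blast
qed

theorem lemma3p8:
  fixes U :: "nat filter"
    and T :: "nat \<Rightarrow> 'a::{complex_inner, complete_space} \<Rightarrow> 'a"
    and B :: "'a \<Rightarrow> 'a"
  assumes "separable_type TYPE('a)"
    and "infinite_dimensional TYPE('a)"
    and "free_ultrafilter U"
    and "\<And>n. cblinear (T n)"
    and "cblinear B"
  shows "(sot_conv T B \<longrightarrow> ue_restriction U T B)
    \<and> (wot_conv T B \<longrightarrow> ue_compression U T B)
    \<and> (star_sot_conv T B \<longrightarrow> ue_reducing_part U T B)"
proof (intro conjI impI)
  show "ue_restriction U T B" if "sot_conv T B"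
    using assms(3,4) that by (rule ue_restriction_if_sot_conv)
  show "ue_compression U T B" if "wot_conv T B"
    using assms(3) that by (rule ue_compression_if_wot_conv)
  show "ue_reducing_part U T B" if "star_sot_conv T B"
    using assms(3,4) that by (rule ue_reducing_part_if_star_sot_conv)
qed

end
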